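(* For each $i\in\{1,2,3,4\}$, the minimal polynomial of $\mathcal{M}_i^{-1}\mathcal{A}$ has degree at most $n+q+1$.
   Context: Let $A_1\in\mathbb{R}^{p\times n}$ have full column rank and $A_2\in\mathbb{R}^{q\times n}$. Set $P=A_1^TA_1$, and let $\hat P\in\mathbb{R}^{n\times n}$ be symmetric positive definite. Define $\mathcal{A}=\begin{pmatrix}I_p&A_1&0\\0&P&A_2^T\\0&A_2&I_q\end{pmatrix}$, $\mathcal{M}_1=\begin{pmatrix}I_p&0&0\\0&\hat P&0\\0&0&I_q\end{pmatrix}$, $\mathcal{M}_2=\begin{pmatrix}I_p&0&0\\0&\hat P&A_2^T\\0&0&I_q\end{pmatrix}$, $\mathcal{M}_3=\begin{pmatrix}I_p&A_1&0\\0&\hat P&0\\0&0&I_q\end{pmatrix}$, $\mathcal{M}_4=\begin{pmatrix}I_p&A_1&0\\0&\hat P&A_2^T\\0&0&I_q\end{pmatrix}$. *)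

theory Defs
  imports "Jordan_Normal_Form.Matrix" "Jordan_Normal_Form.DL_Rank"
    "HOL-Computational_Algebra.Polynomial"
begin

definition poly_mat :: "real poly \<Rightarrow> real mat \<Rightarrow> real mat" where
  "poly_mat f M = mat (dim_row M) (dim_col M)
     (\<lambda>(i,j). \<Sum>k\<le>degree f. coeff f k * (M ^\<^sub>m k) $$ (i,j))"

definition min_poly_mat :: "real mat \<Rightarrow> real poly" where
  "min_poly_mat M = (THE f. lead_coeff f = 1 \<and> poly_mat f M = 0\<^sub>m (dim_row M) (dim_row M) \<and>
      (\<forall>g. g \<noteq> 0 \<and> poly_mat g M = 0\<^sub>m (dim_row M) (dim_row M) \<longrightarrow> degree f \<le> degree g))"

definition inv_mat :: "real mat \<Rightarrow> real mat" where
  "inv_mat M = (SOME B. B \<in> carrier_mat (dim_row M) (dim_row M) \<and> inverts_mat M B \<and> inverts_mat B M)"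

definition sym_pos_def_mat :: "nat \<Rightarrow> real mat \<Rightarrow> bool" where
  "sym_pos_def_mat n P \<longleftrightarrow> P \<in> carrier_mat n n \<and> transpose_mat P = P \<and>
     (\<forall>x \<in> carrier_vec n. x \<noteq> 0\<^sub>v n \<longrightarrow> x \<bullet> (P *\<^sub>v x) > 0)"

text \<open>3x3 block matrix with row/column block sizes (r1,r2,r3) and (c1,c2,c3).\<close>
definition block3 :: "real mat \<Rightarrow> real mat \<Rightarrow> real mat \<Rightarrow> real mat \<Rightarrow> real mat \<Rightarrow> real mat
   \<Rightarrow> real mat \<Rightarrow> real mat \<Rightarrow> real mat \<Rightarrow> real mat" where
  "block3 B11 B12 B13 B21 B22 B23 B31 B32 B33 =
     four_block_mat B11 (four_block_mat B12 B13 (0\<^sub>m 0 (dim_col B12)) (0\<^sub>m 0 (dim_col B13)))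
       (four_block_mat B21 (0\<^sub>m (dim_row B21) 0) B31 (0\<^sub>m (dim_row B31) 0))
       (four_block_mat B22 B23 B32 B33)"

end

theory Submission
  imports Defs "Jordan_Normal_Form.Char_Poly"
begin

text \<open>Both \<open>\<A>\<close> and every \<open>M\<^sub>i\<close> have the unit vectors \<open>e\<^sub>1, ..., e\<^sub>p\<close> as their
  first \<open>p\<close> columns, so \<open>T = M\<^sub>i\<^sup>-\<^sup>1 \<A>\<close> fixes them and has the block form
  \<open>[[I, X], [0, Z]]\<close> with \<open>Z\<close> of order \<open>n + q\<close>. The lower rows of \<open>\<chi>\<^sub>Z(T)\<close> are
  \<open>\<chi>\<^sub>Z(Z) = 0\<close> (Cayley--Hamilton), so the columns of \<open>\<chi>\<^sub>Z(T)\<close> lie in the span of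
  \<open>e\<^sub>1, ..., e\<^sub>p\<close>, which \<open>T - I\<close> annihilates. Hence \<open>(x - 1) \<chi>\<^sub>Z(x)\<close>, of degree
  \<open>n + q + 1\<close>, annihilates \<open>T\<close>.\<close>

lemma pow_mat_Suc_left:
  assumes "A \<in> carrier_mat n n"
  shows "A ^\<^sub>m Suc k = A * A ^\<^sub>m k"
proof (induction k)
  case 0
  then show ?case using assms by simp
next
  case (Suc k)
  have "A ^\<^sub>m Suc (Suc k) = A * A ^\<^sub>m k * A" using Suc by simp
  also have "\<dots> = A * (A ^\<^sub>m k * A)" using assms by (intro assoc_mult_mat) auto
  finally show ?case by simp
qed

lemma dim_poly_mat [simp]:
  "dim_row (poly_mat f M) = dim_row M" "dim_col (poly_mat f M) = dim_col M"
  unfolding poly_mat_def by simp_all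

lemma poly_mat_carrier [simp]: "M \<in> carrier_mat n n \<Longrightarrow> poly_mat f M \<in> carrier_mat n n"
  unfolding carrier_mat_def by simp

lemma index_poly_mat:
  assumes "i < dim_row M" "j < dim_col M" "degree f \<le> d"
  shows "poly_mat f M $$ (i,j) = (\<Sum>k\<le>d. coeff f k * (M ^\<^sub>m k) $$ (i,j))"
  unfolding poly_mat_def using assms
  by (auto intro!: sum.mono_neutral_left dest: le_degree)

lemma poly_mat_diff:
  assumes M: "M \<in> carrier_mat n n"
  shows "poly_mat (f - g) M = poly_mat f M - poly_mat g M"
proof (rule eq_matI)
  fix i j assume "i < dim_row (poly_mat f M - poly_mat g M)" "j < dim_col (poly_mat f M - poly_mat g M)"
  then have ij: "i < dim_row M" "j < dim_col M" using M by auto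
  let ?d = "max (degree f) (degree g)"
  have "degree (f - g) \<le> ?d" by (rule degree_diff_le) auto
  then show "poly_mat (f - g) M $$ (i,j) = (poly_mat f M - poly_mat g M) $$ (i,j)"
    using ij M by (simp add: index_poly_mat[of _ _ _ _ ?d] left_diff_distrib sum_subtractf)
qed (use M in auto)

lemma poly_mat_smult:
  assumes M: "M \<in> carrier_mat n n"
  shows "poly_mat (smult c f) M = c \<cdot>\<^sub>m poly_mat f M"
proof (rule eq_matI)
  fix i j assume "i < dim_row (c \<cdot>\<^sub>m poly_mat f M)" "j < dim_col (c \<cdot>\<^sub>m poly_mat f M)"
  then have ij: "i < dim_row M" "j < dim_col M" using M by auto
  then show "poly_mat (smult c f) M $$ (i,j) = (c \<cdot>\<^sub>m poly_mat f M) $$ (i,j)"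
    using M by (simp add: index_poly_mat[of _ _ _ _ "degree f"] sum_distrib_left mult.assoc)
qed (use M in auto)

lemma poly_mat_pCons_0:
  assumes M: "M \<in> carrier_mat n n"
  shows "poly_mat (pCons 0 f) M = M * poly_mat f M"
proof (rule eq_matI)
  fix i j assume "i < dim_row (M * poly_mat f M)" "j < dim_col (M * poly_mat f M)"
  then have i: "i < n" and j: "j < n" using M by auto
  have "poly_mat (pCons 0 f) M $$ (i,j) = (\<Sum>k\<le>Suc (degree f). coeff (pCons 0 f) k * (M ^\<^sub>m k) $$ (i,j))"
    using i j M by (intro index_poly_mat) (auto simp: degree_pCons_le)
  also have "\<dots> = (\<Sum>k\<le>degree f. coeff f k * (M ^\<^sub>m Suc k) $$ (i,j))"
    by (subst sum.atMost_Suc_shift) simp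
  also have "\<dots> = (\<Sum>k\<le>degree f. \<Sum>l<n. coeff f k * (M $$ (i,l) * (M ^\<^sub>m k) $$ (l,j)))"
    using i j M by (simp add: pow_mat_Suc_left[OF M] scalar_prod_def sum_distrib_left
        atLeast0LessThan del: pow_mat.simps)
  also have "\<dots> = (\<Sum>l<n. M $$ (i,l) * (\<Sum>k\<le>degree f. coeff f k * (M ^\<^sub>m k) $$ (l,j)))"
    by (subst sum.swap) (simp add: sum_distrib_left algebra_simps)
  also have "\<dots> = (M * poly_mat f M) $$ (i,j)"
    using i j M by (simp add: index_poly_mat[of _ _ _ _ "degree f"] scalar_prod_def atLeast0LessThan)
  finally show "poly_mat (pCons 0 f) M $$ (i,j) = (M * poly_mat f M) $$ (i,j)" .
qed (use M in auto)

lemma poly_mat_x_minus_1_mult: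
  assumes M: "M \<in> carrier_mat n n"
  shows "poly_mat ([:-1, 1:] * f) M = (M - 1\<^sub>m n) * poly_mat f M"
proof -
  have "[:-1, 1:] * f = pCons 0 f - f" by (simp add: algebra_simps)
  then show ?thesis
    using M by (simp add: poly_mat_diff poly_mat_pCons_0
        minus_mult_distrib_mat[OF M one_carrier_mat poly_mat_carrier[OF M]])
qed

definition coeff_mat :: "'a::zero poly mat \<Rightarrow> nat \<Rightarrow> 'a mat" where
  "coeff_mat P k = mat (dim_row P) (dim_col P) (\<lambda>ij. coeff (P $$ ij) k)"

lemma dim_coeff_mat [simp]:
  "dim_row (coeff_mat P k) = dim_row P" "dim_col (coeff_mat P k) = dim_col P"
  unfolding coeff_mat_def by simp_all

lemma coeff_mat_carrier [simp]: "P \<in> carrier_mat nr nc \<Longrightarrow> coeff_mat P k \<in> carrier_mat nr nc"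
  unfolding carrier_mat_def by simp

lemma coeff_mat_eventually_zero: "\<exists>d. \<forall>k>d. coeff_mat P k = 0\<^sub>m (dim_row P) (dim_col P)"
proof (intro exI allI impI)
  define d where "d = (\<Sum>ij\<in>{..<dim_row P} \<times> {..<dim_col P}. degree (P $$ ij))"
  fix k assume k: "k > d"
  show "coeff_mat P k = 0\<^sub>m (dim_row P) (dim_col P)"
  proof (rule eq_matI)
    fix i j assume "i < dim_row (0\<^sub>m (dim_row P) (dim_col P) :: 'a mat)"
      "j < dim_col (0\<^sub>m (dim_row P) (dim_col P) :: 'a mat)"
    then have ij: "(i,j) \<in> {..<dim_row P} \<times> {..<dim_col P}" by simp
    have "degree (P $$ (i,j)) \<le> d"
      unfolding d_def by (rule member_le_sum[OF ij]) auto
    then show "coeff_mat P k $$ (i,j) = 0\<^sub>m (dim_row P) (dim_col P) $$ (i,j)"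
      using ij k by (simp add: coeff_mat_def coeff_eq_0)
  qed (simp_all add: coeff_mat_def)
qed

lemma coeff_mat_char_poly_matrix_mult:
  fixes A :: "'a::comm_ring_1 mat"
  assumes A: "A \<in> carrier_mat n n" and P: "P \<in> carrier_mat n nc"
  shows "coeff_mat (char_poly_matrix A * P) k =
    (if k = 0 then 0\<^sub>m n nc else coeff_mat P (k - 1)) - A * coeff_mat P k" (is "_ = ?rhs")
proof (rule eq_matI)
  fix a b assume "a < dim_row ?rhs" "b < dim_col ?rhs"
  then have a: "a < n" and b: "b < nc" using A P by auto
  let ?shift = "if k = 0 then 0 else coeff (P $$ (a,b)) (k - 1)"
  have "coeff_mat (char_poly_matrix A * P) k $$ (a,b) =
      (\<Sum>l<n. coeff (char_poly_matrix A $$ (a,l) * P $$ (l,b)) k)"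
    using char_poly_matrix_closed[OF A] P a b
    by (simp add: coeff_mat_def scalar_prod_def coeff_sum atLeast0LessThan)
  also have "\<dots> = (\<Sum>l<n. (if l = a then ?shift else 0) - A $$ (a,l) * coeff (P $$ (l,b)) k)"
    using A a by (intro sum.cong) (auto simp: char_poly_matrix_def coeff_pCons split: nat.split)
  also have "\<dots> = ?shift - (A * coeff_mat P k) $$ (a,b)"
    using A P a b by (simp add: sum_subtractf scalar_prod_def coeff_mat_def atLeast0LessThan)
  finally show "coeff_mat (char_poly_matrix A * P) k $$ (a,b) = ?rhs $$ (a,b)"
    using A P a b by (simp add: coeff_mat_def)
qed (use A carrier_matD[OF char_poly_matrix_closed[OF A]] P in \<open>auto simp: coeff_mat_def\<close>)

text \<open>Here \<open>C k\<close> is the coefficient of \<open>x\<^sup>k\<^sup>-\<^sup>1\<close> in \<open>adj(x I - A)\<close>; comparing coefficients of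
  \<open>x\<^sup>k\<close> in \<open>(x I - A) adj(x I - A) = \<chi>\<^sub>A(x) I\<close> gives \<open>C k - A C (k + 1) = c\<^sub>k I\<close>.\<close>

lemma coeff_char_poly_smult_pow_mat:
  fixes A :: "'a::comm_ring_1 mat"
  assumes A: "A \<in> carrier_mat n n"
  defines "C k \<equiv> if k = 0 then 0\<^sub>m n n else coeff_mat (adj_mat (char_poly_matrix A)) (k - 1)"
  shows "coeff (char_poly A) k \<cdot>\<^sub>m A ^\<^sub>m k = A ^\<^sub>m k * C k - A ^\<^sub>m Suc k * C (Suc k)"
proof -
  define Adj where "Adj = adj_mat (char_poly_matrix A)"
  have Adj: "Adj \<in> carrier_mat n n"
    unfolding Adj_def using adj_mat(1)[OF char_poly_matrix_closed[OF A]] .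
  have C: "C k \<in> carrier_mat n n" for k
    unfolding C_def Adj_def[symmetric] using Adj by simp
  have Ak: "A ^\<^sub>m k \<in> carrier_mat n n" using A by simp
  have "coeff_mat (char_poly_matrix A * Adj) k = coeff (char_poly A) k \<cdot>\<^sub>m 1\<^sub>m n"
    unfolding Adj_def char_poly_def adj_mat(2)[OF char_poly_matrix_closed[OF A]]
    by (rule eq_matI) (auto simp: coeff_mat_def)
  then have "C k - A * C (Suc k) = coeff (char_poly A) k \<cdot>\<^sub>m 1\<^sub>m n"
    using coeff_mat_char_poly_matrix_mult[OF A Adj, of k] by (simp add: C_def Adj_def)
  then have "coeff (char_poly A) k \<cdot>\<^sub>m A ^\<^sub>m k = A ^\<^sub>m k * (C k - A * C (Suc k))"
    using Ak by (simp add: mult_smult_distrib[OF Ak one_carrier_mat] right_mult_one_mat[OF Ak])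
  also have "\<dots> = A ^\<^sub>m k * C k - A ^\<^sub>m k * A * C (Suc k)"
    using mult_minus_distrib_mat[OF Ak C mult_carrier_mat[OF A C]] assoc_mult_mat[OF Ak A C]
    by simp
  finally show ?thesis by simp
qed

theorem poly_mat_char_poly:
  fixes A :: "real mat"
  assumes A: "A \<in> carrier_mat n n"
  shows "poly_mat (char_poly A) A = 0\<^sub>m n n"
proof (rule eq_matI)
  fix i j assume "i < dim_row (0\<^sub>m n n :: real mat)" "j < dim_col (0\<^sub>m n n :: real mat)"
  then have i: "i < n" and j: "j < n" by auto
  define C where "C k = (if k = 0 then 0\<^sub>m n n else coeff_mat (adj_mat (char_poly_matrix A)) (k - 1))" for k
  define F where "F k = (A ^\<^sub>m k * C k) $$ (i,j)" for k
  have C: "C k \<in> carrier_mat n n" for k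
    unfolding C_def using adj_mat(1)[OF char_poly_matrix_closed[OF A]] by simp
  obtain d where d: "\<And>k. k > d \<Longrightarrow> coeff_mat (adj_mat (char_poly_matrix A)) k = 0\<^sub>m n n"
    using coeff_mat_eventually_zero[of "adj_mat (char_poly_matrix A)"]
      adj_mat(1)[OF char_poly_matrix_closed[OF A]] by auto
  define D where "D = n + d + 1"
  have "poly_mat (char_poly A) A $$ (i,j) = (\<Sum>k\<le>D. coeff (char_poly A) k * (A ^\<^sub>m k) $$ (i,j))"
    using A i j degree_monic_char_poly[OF A] by (intro index_poly_mat) (auto simp: D_def)
  also have "\<dots> = (\<Sum>k\<le>D. F k - F (Suc k))"
  proof (rule sum.cong)
    fix k
    have "coeff (char_poly A) k * (A ^\<^sub>m k) $$ (i,j) = (coeff (char_poly A) k \<cdot>\<^sub>m A ^\<^sub>m k) $$ (i,j)"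
      using A i j by simp
    also have "\<dots> = F k - F (Suc k)"
      unfolding coeff_char_poly_smult_pow_mat[OF A] C_def[symmetric] F_def
      using A C[of k] C[of "Suc k"] i j by (simp add: index_minus_mat del: pow_mat.simps)
    finally show "coeff (char_poly A) k * (A ^\<^sub>m k) $$ (i,j) = F k - F (Suc k)" .
  qed simp
  also have "\<dots> = F 0 - F (Suc D)"
    by (rule sum_telescope)
  also have "\<dots> = 0"
    using A i j d[of D] by (simp add: F_def C_def D_def)
  finally show "poly_mat (char_poly A) A $$ (i,j) = 0\<^sub>m n n $$ (i,j)"
    using i j by simp
qed (use A in auto)

lemma min_poly_mat_eqI:
  assumes M: "M \<in> carrier_mat n n"
    and monic: "lead_coeff f = 1" and annihilates: "poly_mat f M = 0\<^sub>m n n"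
    and least: "\<And>g. g \<noteq> 0 \<Longrightarrow> poly_mat g M = 0\<^sub>m n n \<Longrightarrow> degree f \<le> degree g"
  shows "min_poly_mat M = f"
  unfolding min_poly_mat_def carrier_matD(1)[OF M]
proof (rule the_equality)
  show "lead_coeff f = 1 \<and> poly_mat f M = 0\<^sub>m n n \<and>
      (\<forall>g. g \<noteq> 0 \<and> poly_mat g M = 0\<^sub>m n n \<longrightarrow> degree f \<le> degree g)"
    using monic annihilates least by blast
next
  fix f' assume "lead_coeff f' = 1 \<and> poly_mat f' M = 0\<^sub>m n n \<and>
      (\<forall>g. g \<noteq> 0 \<and> poly_mat g M = 0\<^sub>m n n \<longrightarrow> degree f' \<le> degree g)"
  then have monic': "lead_coeff f' = 1" and annihilates': "poly_mat f' M = 0\<^sub>m n n"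
    and least': "\<And>g. g \<noteq> 0 \<Longrightarrow> poly_mat g M = 0\<^sub>m n n \<Longrightarrow> degree f' \<le> degree g"
    by blast+
  have "f \<noteq> 0" "f' \<noteq> 0" using monic monic' by auto
  then have deg: "degree f' = degree f"
    using least[OF _ annihilates'] least'[OF _ annihilates] by (intro le_antisym)
  show "f' = f"
  proof (rule ccontr)
    assume "f' \<noteq> f"
    then have "f' - f \<noteq> 0" by simp
    moreover have "poly_mat (f' - f) M = 0\<^sub>m n n"
      using annihilates annihilates' M by (simp add: poly_mat_diff)
    moreover have "degree (f' - f) < degree f"
    proof (rule degree_lessI)
      show "\<forall>k\<ge>degree f. coeff (f' - f) k = 0"
        using deg monic monic' by (auto simp: le_less coeff_eq_0)
    qed (use \<open>f' - f \<noteq> 0\<close> in blast)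
    ultimately show False using least by (meson not_le)
  qed
qed

lemma degree_min_poly_mat_le:
  assumes M: "M \<in> carrier_mat n n" and "g \<noteq> 0" and "poly_mat g M = 0\<^sub>m n n"
  shows "degree (min_poly_mat M) \<le> degree g"
proof -
  obtain h where h: "h \<noteq> 0" "poly_mat h M = 0\<^sub>m n n"
    and h_least: "\<And>g. g \<noteq> 0 \<Longrightarrow> poly_mat g M = 0\<^sub>m n n \<Longrightarrow> degree h \<le> degree g"
    using ex_has_least_nat[of "\<lambda>g. g \<noteq> 0 \<and> poly_mat g M = 0\<^sub>m n n" g degree] assms by blast
  define f where "f = smult (inverse (lead_coeff h)) h"
  have "min_poly_mat M = f"
  proof (rule min_poly_mat_eqI[OF M])
    show "lead_coeff f = 1" "poly_mat f M = 0\<^sub>m n n"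
      using h M by (simp_all add: f_def lead_coeff_smult poly_mat_smult)
    show "degree f \<le> degree g'" if "g' \<noteq> 0" "poly_mat g' M = 0\<^sub>m n n" for g'
      using h_least[OF that] h by (simp add: f_def)
  qed
  then show ?thesis
    using h_least assms by (simp add: f_def)
qed

lemma sum_lessThan_add:
  fixes p m :: nat
  shows "(\<Sum>l<p + m. f l) = (\<Sum>l<p. f l) + (\<Sum>l<m. f (p + l))"
  by (induction m) (simp_all add: ac_simps)

lemma index_col_unit_vec:
  assumes "T \<in> carrier_mat N N" "col T j = unit_vec N j" "i < N" "j < N"
  shows "T $$ (i,j) = (if i = j then 1 else 0)"
  using index_col[of i T j] assms by auto

lemma col_pow_mat_unit_vec:
  assumes T: "T \<in> carrier_mat N N" and j: "j < N" and col: "col T j = unit_vec N j"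
  shows "col (T ^\<^sub>m k) j = unit_vec N j"
proof (induction k)
  case 0
  show ?case using T j by simp
next
  case (Suc k)
  have "col (T ^\<^sub>m Suc k) j = T ^\<^sub>m k *\<^sub>v col (1\<^sub>m N) j"
    using col_mult2[OF pow_carrier_mat[OF T] T j, of k] col j by simp
  also have "\<dots> = col (T ^\<^sub>m k) j"
    using T j col_mult2[OF pow_carrier_mat[OF T] one_carrier_mat j, of k] by simp
  finally show ?case using Suc by simp
qed

lemma pow_mat_lower_right:
  assumes T: "T \<in> carrier_mat (p + m) (p + m)"
    and unit: "\<And>j. j < p \<Longrightarrow> col T j = unit_vec (p + m) j"
    and Z: "Z \<in> carrier_mat m m" and Z_T: "\<And>a b. a < m \<Longrightarrow> b < m \<Longrightarrow> Z $$ (a,b) = T $$ (p + a, p + b)"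
    and a: "a < m" and b: "b < m"
  shows "(T ^\<^sub>m k) $$ (p + a, p + b) = (Z ^\<^sub>m k) $$ (a,b)"
  using b
proof (induction k arbitrary: b)
  case 0
  then show ?case using T Z a by simp
next
  case (Suc k)
  have lower_left: "(T ^\<^sub>m k) $$ (p + a, l) = 0" if "l < p" for l
    using index_col_unit_vec[OF _ col_pow_mat_unit_vec[OF T _ unit]] T a that by simp
  have "(T ^\<^sub>m Suc k) $$ (p + a, p + b) = (\<Sum>l<p + m. (T ^\<^sub>m k) $$ (p + a, l) * T $$ (l, p + b))"
    using T a Suc.prems by (simp add: scalar_prod_def atLeast0LessThan)
  also have "\<dots> = (\<Sum>l<m. (Z ^\<^sub>m k) $$ (a,l) * Z $$ (l,b))"
    using Suc lower_left Z_T by (simp add: sum_lessThan_add)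
  also have "\<dots> = (Z ^\<^sub>m Suc k) $$ (a,b)"
    using Z a Suc.prems by (simp add: scalar_prod_def atLeast0LessThan)
  finally show ?case .
qed

lemma poly_mat_char_poly_lower_rows:
  assumes T: "T \<in> carrier_mat (p + m) (p + m)"
    and unit: "\<And>j. j < p \<Longrightarrow> col T j = unit_vec (p + m) j"
    and Z: "Z \<in> carrier_mat m m" and Z_T: "\<And>a b. a < m \<Longrightarrow> b < m \<Longrightarrow> Z $$ (a,b) = T $$ (p + a, p + b)"
    and a: "a < m" and j: "j < p + m"
  shows "poly_mat (char_poly Z) T $$ (p + a, j) = 0"
proof (cases "j < p")
  case True
  have "(T ^\<^sub>m k) $$ (p + a, j) = 0" for k
    using index_col_unit_vec[OF _ col_pow_mat_unit_vec[OF T _ unit]] T a True by simp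
  then show ?thesis
    using T a j by (simp add: index_poly_mat[of _ _ _ _ "degree (char_poly Z)"])
next
  case False
  then obtain b where b: "j = p + b" "b < m"
    using j by (metis add_less_cancel_left le_add_diff_inverse not_less)
  have "poly_mat (char_poly Z) T $$ (p + a, p + b) = poly_mat (char_poly Z) Z $$ (a,b)"
    using T Z a b pow_mat_lower_right[OF T unit Z Z_T a]
    by (simp add: index_poly_mat[of _ _ _ _ "degree (char_poly Z)"])
  then show ?thesis
    using poly_mat_char_poly[OF Z] a b by simp
qed

lemma poly_mat_unit_cols_annihilator:
  assumes T: "T \<in> carrier_mat (p + m) (p + m)"
    and unit: "\<And>j. j < p \<Longrightarrow> col T j = unit_vec (p + m) j"
    and Z: "Z \<in> carrier_mat m m" and Z_T: "\<And>a b. a < m \<Longrightarrow> b < m \<Longrightarrow> Z $$ (a,b) = T $$ (p + a, p + b)"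
  shows "poly_mat ([:-1, 1:] * char_poly Z) T = 0\<^sub>m (p + m) (p + m)"
proof (rule eq_matI)
  fix i j assume "i < dim_row (0\<^sub>m (p + m) (p + m) :: real mat)" "j < dim_col (0\<^sub>m (p + m) (p + m) :: real mat)"
  then have i: "i < p + m" and j: "j < p + m" by auto
  let ?Y = "poly_mat (char_poly Z) T"
  have Y: "?Y \<in> carrier_mat (p + m) (p + m)" using T by simp
  have vanish: "(T - 1\<^sub>m (p + m)) $$ (i,l) * ?Y $$ (l,j) = 0" if l: "l < p + m" for l
  proof (cases "l < p")
    case True
    then show ?thesis using index_col_unit_vec[OF T unit] T i by simp
  next
    case False
    then obtain a where "l = p + a" "a < m"
      using l by (metis add_less_cancel_left le_add_diff_inverse not_less)
    then show ?thesis using poly_mat_char_poly_lower_rows[OF T unit Z Z_T _ j] by simp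
  qed
  have "poly_mat ([:-1, 1:] * char_poly Z) T $$ (i,j) = ((T - 1\<^sub>m (p + m)) * ?Y) $$ (i,j)"
    by (simp only: poly_mat_x_minus_1_mult[OF T])
  also have "\<dots> = (\<Sum>l<p + m. (T - 1\<^sub>m (p + m)) $$ (i,l) * ?Y $$ (l,j))"
    using T i j by (simp add: scalar_prod_def atLeast0LessThan)
  also have "\<dots> = 0" by (intro sum.neutral ballI vanish) simp
  finally show "poly_mat ([:-1, 1:] * char_poly Z) T $$ (i,j) = 0\<^sub>m (p + m) (p + m) $$ (i,j)"
    using i j by simp
qed (use T in auto)

lemma degree_min_poly_mat_unit_cols:
  assumes T: "T \<in> carrier_mat (p + m) (p + m)"
    and unit: "\<And>j. j < p \<Longrightarrow> col T j = unit_vec (p + m) j"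
  shows "degree (min_poly_mat T) \<le> m + 1"
proof -
  define Z where "Z = mat m m (\<lambda>(a,b). T $$ (p + a, p + b))"
  have Z: "Z \<in> carrier_mat m m" unfolding Z_def by simp
  have Z_T: "Z $$ (a,b) = T $$ (p + a, p + b)" if "a < m" "b < m" for a b
    unfolding Z_def using that by simp
  define g where "g = [:-1, 1:] * char_poly Z"
  have linear: "[:-1, 1:] \<noteq> (0 :: real poly)" "degree [:-1, 1 :: real:] = 1" by simp_all
  have char_poly: "char_poly Z \<noteq> 0" "degree (char_poly Z) = m"
    using degree_monic_char_poly[OF Z] by auto
  have "g \<noteq> 0" unfolding g_def using linear char_poly by (metis mult_eq_0_iff)
  moreover have "degree g = m + 1"
    unfolding g_def using degree_mult_eq[OF linear(1) char_poly(1)] linear char_poly by simp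
  moreover have "poly_mat g T = 0\<^sub>m (p + m) (p + m)"
    unfolding g_def by (rule poly_mat_unit_cols_annihilator[OF T unit Z Z_T])
  ultimately show ?thesis
    using degree_min_poly_mat_le[OF T] by metis
qed

lemma inv_mat_left_inverse:
  fixes M :: "real mat"
  assumes M: "M \<in> carrier_mat n n" and det: "det M \<noteq> 0"
  shows "inv_mat M \<in> carrier_mat n n" "inv_mat M * M = 1\<^sub>m n"
proof -
  obtain B where "B \<in> carrier_mat n n" "M * B = 1\<^sub>m n" "B * M = 1\<^sub>m n"
    using det_non_zero_imp_unit[OF M det, of "()"] unfolding Units_def ring_mat_def by auto
  then have "\<exists>B. B \<in> carrier_mat (dim_row M) (dim_row M) \<and> inverts_mat M B \<and> inverts_mat B M"
    using M unfolding inverts_mat_def by auto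
  then have "inv_mat M \<in> carrier_mat (dim_row M) (dim_row M) \<and> inverts_mat (inv_mat M) M"
    unfolding inv_mat_def by (rule someI2_ex) blast
  then show "inv_mat M \<in> carrier_mat n n" "inv_mat M * M = 1\<^sub>m n"
    using M unfolding inverts_mat_def by auto
qed

lemma col_inv_mat_mult_unit_vec:
  fixes A M :: "real mat"
  assumes A: "A \<in> carrier_mat n n" and M: "M \<in> carrier_mat n n" and "det M \<noteq> 0" and j: "j < n"
    and "col A j = unit_vec n j" "col M j = unit_vec n j"
  shows "col (inv_mat M * A) j = unit_vec n j"
proof -
  note inv = inv_mat_left_inverse[OF M \<open>det M \<noteq> 0\<close>]
  have "col (inv_mat M * A) j = inv_mat M *\<^sub>v col M j"
    using col_mult2[OF inv(1) A j] assms by simp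
  also have "\<dots> = col (inv_mat M * M) j"
    using col_mult2[OF inv(1) M j] by simp
  finally show ?thesis using inv(2) j by simp
qed

lemma degree_min_poly_mat_inv_mult:
  fixes A M :: "real mat"
  assumes A: "A \<in> carrier_mat (p + m) (p + m)" and M: "M \<in> carrier_mat (p + m) (p + m)"
    and det: "det M \<noteq> 0"
    and A_unit: "\<And>j. j < p \<Longrightarrow> col A j = unit_vec (p + m) j"
    and M_unit: "\<And>j. j < p \<Longrightarrow> col M j = unit_vec (p + m) j"
  shows "degree (min_poly_mat (inv_mat M * A)) \<le> m + 1"
proof (rule degree_min_poly_mat_unit_cols)
  show "inv_mat M * A \<in> carrier_mat (p + m) (p + m)"
    using inv_mat_left_inverse(1)[OF M det] A by simp
  show "col (inv_mat M * A) j = unit_vec (p + m) j" if "j < p" for j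
    using col_inv_mat_mult_unit_vec[OF A M det _ A_unit M_unit] that by simp
qed

lemma block3_carrier:
  assumes "B11 \<in> carrier_mat n1 n1" "B22 \<in> carrier_mat n2 n2" "B33 \<in> carrier_mat n3 n3"
  shows "block3 B11 B12 B13 B21 B22 B23 B31 B32 B33 \<in> carrier_mat (n1 + (n2 + n3)) (n1 + (n2 + n3))"
  using assms unfolding block3_def carrier_mat_def by simp

lemma col_block3_unit_vec:
  assumes "B22 \<in> carrier_mat n n" "B33 \<in> carrier_mat q q" and j: "j < p"
  shows "col (block3 (1\<^sub>m p) B12 B13 (0\<^sub>m n p) B22 B23 (0\<^sub>m q p) B32 B33) j = unit_vec (p + (n + q)) j"
  using assms unfolding block3_def by (intro eq_vecI) auto

lemma det_block3_unit_diag: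
  fixes X P Y :: "real mat"
  assumes X: "X \<in> carrier_mat p n" and P: "P \<in> carrier_mat n n" and Y: "Y \<in> carrier_mat n q"
  shows "det (block3 (1\<^sub>m p) X (0\<^sub>m p q) (0\<^sub>m n p) P Y (0\<^sub>m q p) (0\<^sub>m q n) (1\<^sub>m q)) = det P"
proof -
  have upper: "four_block_mat X (0\<^sub>m p q) (0\<^sub>m 0 n) (0\<^sub>m 0 q) \<in> carrier_mat p (n + q)"
    using X by auto
  have lower: "four_block_mat P Y (0\<^sub>m q n) (1\<^sub>m q) \<in> carrier_mat (n + q) (n + q)"
    using P by auto
  have "det (block3 (1\<^sub>m p) X (0\<^sub>m p q) (0\<^sub>m n p) P Y (0\<^sub>m q p) (0\<^sub>m q n) (1\<^sub>m q)) =
      det (1\<^sub>m p) * det (four_block_mat P Y (0\<^sub>m q n) (1\<^sub>m q))"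
    unfolding block3_def using X
    by (simp add: det_four_block_mat_lower_left_zero[OF one_carrier_mat upper _ lower])
  also have "\<dots> = det P"
    using det_four_block_mat_lower_left_zero[OF P Y refl one_carrier_mat] by simp
  finally show ?thesis .
qed

lemma sym_pos_def_mat_det_nonzero:
  assumes "sym_pos_def_mat n P"
  shows "det P \<noteq> 0"
proof
  assume "det P = 0"
  have P: "P \<in> carrier_mat n n" using assms unfolding sym_pos_def_mat_def by auto
  obtain v where v: "v \<in> carrier_vec n" "v \<noteq> 0\<^sub>v n" "P *\<^sub>v v = 0\<^sub>v n"
    using det_0_iff_vec_prod_zero[OF P] \<open>det P = 0\<close> by auto
  then have "v \<bullet> (P *\<^sub>v v) > 0" using assms unfolding sym_pos_def_mat_def by auto
  then show False using v by simp
qed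

theorem theorem6:
  fixes p n q :: nat and A1 A2 Phat :: "real mat"
  assumes A1: "A1 \<in> carrier_mat p n"
    and rankA1: "vec_space.rank p A1 = n"
    and A2: "A2 \<in> carrier_mat q n"
    and Phat: "sym_pos_def_mat n Phat"
  defines "P \<equiv> transpose_mat A1 * A1"
  defines "\<A> \<equiv> block3 (1\<^sub>m p) A1 (0\<^sub>m p q)
                       (0\<^sub>m n p) P (transpose_mat A2)
                       (0\<^sub>m q p) A2 (1\<^sub>m q)"
    and "M1 \<equiv> block3 (1\<^sub>m p) (0\<^sub>m p n) (0\<^sub>m p q)
                    (0\<^sub>m n p) Phat (0\<^sub>m n q)
                    (0\<^sub>m q p) (0\<^sub>m q n) (1\<^sub>m q)"
    and "M2 \<equiv> block3 (1\<^sub>m p) (0\<^sub>m p n) (0\<^sub>m p q)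
                    (0\<^sub>m n p) Phat (transpose_mat A2)
                    (0\<^sub>m q p) (0\<^sub>m q n) (1\<^sub>m q)"
    and "M3 \<equiv> block3 (1\<^sub>m p) A1 (0\<^sub>m p q)
                    (0\<^sub>m n p) Phat (0\<^sub>m n q)
                    (0\<^sub>m q p) (0\<^sub>m q n) (1\<^sub>m q)"
    and "M4 \<equiv> block3 (1\<^sub>m p) A1 (0\<^sub>m p q)
                    (0\<^sub>m n p) Phat (transpose_mat A2)
                    (0\<^sub>m q p) (0\<^sub>m q n) (1\<^sub>m q)"
  shows "\<forall>M \<in> {M1, M2, M3, M4}. degree (min_poly_mat (inv_mat M * \<A>)) \<le> n + q + 1"
proof -
  \<comment> \<open>Only the common unit first block column of \<open>\<A>\<close> and \<open>M\<^sub>i\<close> and the invertibility of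
    \<open>Phat\<close> matter.\<close>
  have Phat_carrier: "Phat \<in> carrier_mat n n" using Phat unfolding sym_pos_def_mat_def by simp
  have A: "\<A> \<in> carrier_mat (p + (n + q)) (p + (n + q))"
    unfolding \<A>_def P_def using A1 by (intro block3_carrier) auto
  have A_unit: "col \<A> j = unit_vec (p + (n + q)) j" if "j < p" for j
    unfolding \<A>_def P_def using A1 that by (intro col_block3_unit_vec) auto
  have bound: "degree (min_poly_mat (inv_mat
      (block3 (1\<^sub>m p) X (0\<^sub>m p q) (0\<^sub>m n p) Phat Y (0\<^sub>m q p) (0\<^sub>m q n) (1\<^sub>m q)) * \<A>)) \<le> n + q + 1"
    if X: "X \<in> carrier_mat p n" and Y: "Y \<in> carrier_mat n q" for X Y
  proof (rule degree_min_poly_mat_inv_mult[OF A _ _ A_unit])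
    show "block3 (1\<^sub>m p) X (0\<^sub>m p q) (0\<^sub>m n p) Phat Y (0\<^sub>m q p) (0\<^sub>m q n) (1\<^sub>m q)
        \<in> carrier_mat (p + (n + q)) (p + (n + q))"
      using Phat_carrier by (intro block3_carrier) auto
    show "det (block3 (1\<^sub>m p) X (0\<^sub>m p q) (0\<^sub>m n p) Phat Y (0\<^sub>m q p) (0\<^sub>m q n) (1\<^sub>m q)) \<noteq> 0"
      unfolding det_block3_unit_diag[OF X Phat_carrier Y] by (rule sym_pos_def_mat_det_nonzero[OF Phat])
    show "col (block3 (1\<^sub>m p) X (0\<^sub>m p q) (0\<^sub>m n p) Phat Y (0\<^sub>m q p) (0\<^sub>m q n) (1\<^sub>m q)) j
        = unit_vec (p + (n + q)) j" if "j < p" for j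
      using Phat_carrier that by (intro col_block3_unit_vec) auto
  qed
  have A2T: "transpose_mat A2 \<in> carrier_mat n q" using A2 by simp
  show ?thesis
    unfolding M1_def M2_def M3_def M4_def
    using bound[OF zero_carrier_mat zero_carrier_mat] bound[OF zero_carrier_mat A2T]
      bound[OF A1 zero_carrier_mat] bound[OF A1 A2T] by auto
qed

end
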